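(* For $n \ge 2$, if $n \pmod 6 \in \{2,4\}$, then the path $P_n$ is $\gamma_{\rm tg}$-critical.
   Context: Total domination game: Dominator and Staller alternately choose vertices, each chosen vertex must be adjacent to some vertex not yet totally dominated; the game ends when no legal move exists; Dominator minimizes, Staller maximizes the number of moves; $\gamma_{\rm tg}(G)$ is the number of moves in the Dominator-start game under optimal play. $G|v$ is $G$ with $v$ declared already totally dominated, with $\gamma_{\rm tg}(G|v)$ defined analogously. $G$ is $\gamma_{\rm tg}$-critical if $\gamma_{\rm tg}(G|v)<\gamma_{\rm tg}(G)$ for all vertices $v$. *)

theory Defs
  imports Main
begin

text \<open>A graph is given by a finite vertex set V and a symmetric irreflexive
adjacency relation E. The open neighbourhood of v is the set of neighbours of v in V.\<close>

definition open_nbhd :: "'a set \<Rightarrow> ('a \<Rightarrow> 'a \<Rightarrow> bool) \<Rightarrow> 'a \<Rightarrow> 'a set" where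
  "open_nbhd V E v = {u \<in> V. E v u}"

text \<open>State of the total domination game: the set T of vertices already totally
dominated.\<close>

definition tdg_legal :: "'a set \<Rightarrow> ('a \<Rightarrow> 'a \<Rightarrow> bool) \<Rightarrow> 'a set \<Rightarrow> 'a \<Rightarrow> bool" where
  "tdg_legal V E T v \<longleftrightarrow> v \<in> V \<and> \<not> open_nbhd V E v \<subseteq> T"

text \<open>Number of remaining moves under optimal play, with a fuel bound k and a flag
saying whether Dominator (True) or Staller (False) is to move. Every legal move
strictly enlarges T \<inter> V, so with fuel card V the value is exact.\<close>

fun tdg_val :: "'a set \<Rightarrow> ('a \<Rightarrow> 'a \<Rightarrow> bool) \<Rightarrow> nat \<Rightarrow> bool \<Rightarrow> 'a set \<Rightarrow> nat" where
  "tdg_val V E 0 d T = 0"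
| "tdg_val V E (Suc k) d T =
     (if {v. tdg_legal V E T v} = {} then 0
      else if d then Min ((\<lambda>v. Suc (tdg_val V E k False (T \<union> open_nbhd V E v))) ` {v. tdg_legal V E T v})
      else Max ((\<lambda>v. Suc (tdg_val V E k True (T \<union> open_nbhd V E v))) ` {v. tdg_legal V E T v}))"

definition gamma_tg :: "'a set \<Rightarrow> ('a \<Rightarrow> 'a \<Rightarrow> bool) \<Rightarrow> nat" where
  "gamma_tg V E = tdg_val V E (card V) True {}"

text \<open>gamma_tg(G|v): same game, but v is declared already totally dominated.\<close>
definition gamma_tg_pd :: "'a set \<Rightarrow> ('a \<Rightarrow> 'a \<Rightarrow> bool) \<Rightarrow> 'a \<Rightarrow> nat" where
  "gamma_tg_pd V E v = tdg_val V E (card V) True {v}"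

definition tg_critical :: "'a set \<Rightarrow> ('a \<Rightarrow> 'a \<Rightarrow> bool) \<Rightarrow> bool" where
  "tg_critical V E \<longleftrightarrow> (\<forall>v\<in>V. gamma_tg_pd V E v < gamma_tg V E)"

definition path_adj :: "nat \<Rightarrow> nat \<Rightarrow> bool" where
  "path_adj i j \<longleftrightarrow> i + 1 = j \<or> j + 1 = i"

end

theory Submission
  imports Defs
begin

text \<open>Let U be the set of vertices of P_n that are not yet totally dominated. Playing v removes
  v - 1 and v + 1 from U, so U falls apart into runs x, x + 2, ..., x + 2(L - 1) of vertices of
  equal parity, and every move shortens one run at an end or splits it into two. Give a run of
  length L the weight (4L + 2) div 3 and let W be the total weight of U; every move lowers W by
  1, 2 or 3. By playing next to the end of a run, of odd weight if W is odd, Dominator lowers W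
  by at least 2, and by 3 if W is odd; by taking a single vertex off such a run, Staller lowers W
  by at most 2, and by 1 if W is odd (for even n this is possible also when the run ends at n).
  Hence the number of remaining moves is W div 2 with Dominator and (W + 1) div 2 with Staller
  to move. For P_n, U consists of two runs of length n/2, and declaring v dominated cuts one of
  them into runs of lengths a and c with a + c + 1 = n/2; this strictly lowers the even number W,
  hence W div 2, unless 3 divides n/2.\<close>

lemma finite_tdg_legal: "finite V \<Longrightarrow> finite {v. tdg_legal V E T v}"
  by (rule finite_subset[of _ V]) (auto simp: tdg_legal_def)

lemma tdg_val_Dominator_le:
  assumes "finite V" "tdg_legal V E T v"
  shows "tdg_val V E (Suc k) True T \<le> Suc (tdg_val V E k False (T \<union> open_nbhd V E v))"
  using assms finite_tdg_legal[OF assms(1), of E T] by (auto intro!: Min_le)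

lemma tdg_val_Dominator_ge:
  assumes "finite V" "tdg_legal V E T v"
    and "\<And>w. tdg_legal V E T w \<Longrightarrow> m \<le> Suc (tdg_val V E k False (T \<union> open_nbhd V E w))"
  shows "m \<le> tdg_val V E (Suc k) True T"
  using assms finite_tdg_legal[OF assms(1), of E T] by (auto simp: Min_ge_iff)

lemma tdg_val_Staller_ge:
  assumes "finite V" "tdg_legal V E T v"
  shows "Suc (tdg_val V E k True (T \<union> open_nbhd V E v)) \<le> tdg_val V E (Suc k) False T"
  using assms finite_tdg_legal[OF assms(1), of E T] by (auto intro!: Max_ge)

lemma tdg_val_Staller_le:
  assumes "finite V"
    and "\<And>w. tdg_legal V E T w \<Longrightarrow> Suc (tdg_val V E k True (T \<union> open_nbhd V E w)) \<le> m"
  shows "tdg_val V E (Suc k) False T \<le> m"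
  using assms finite_tdg_legal[OF assms(1), of E T] by (auto simp: Max_le_iff)

section \<open>Runs of equal parity\<close>

fun run_len :: "nat set \<Rightarrow> nat \<Rightarrow> nat" where
  "run_len U 0 = (if 0 \<in> U then 1 else 0)"
| "run_len U (Suc 0) = (if Suc 0 \<in> U then 1 else 0)"
| "run_len U (Suc (Suc x)) = (if Suc (Suc x) \<in> U then Suc (run_len U x) else 0)"

definition run_ends :: "nat set \<Rightarrow> nat set" where
  "run_ends U = {e \<in> U. e + 2 \<notin> U}"

definition run_sum :: "(nat \<Rightarrow> nat) \<Rightarrow> nat set \<Rightarrow> nat" where
  "run_sum f U = (\<Sum>e\<in>run_ends U. f (run_len U e))"

lemma run_len_eq: "run_len U y = (if y \<in> U then Suc (if 2 \<le> y then run_len U (y - 2) else 0) else 0)"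
  by (induction U y rule: run_len.induct) auto

lemma run_len_notin: "y \<notin> U \<Longrightarrow> run_len U y = 0"
  by (subst run_len_eq) simp

lemma run_len_in: "y \<in> U \<Longrightarrow> run_len U y = Suc (if 2 \<le> y then run_len U (y - 2) else 0)"
  by (subst run_len_eq) simp

lemma run_len_pos: "y \<in> U \<Longrightarrow> 1 \<le> run_len U y"
  by (simp add: run_len_in)

lemma run_len_add:
  "(\<And>t. 1 \<le> t \<Longrightarrow> t \<le> k \<Longrightarrow> y + 2*t \<in> U) \<Longrightarrow> run_len U (y + 2*k) = k + run_len U y"
proof (induction k)
  case (Suc k)
  have "y + 2 * Suc k \<in> U" using Suc.prems[of "Suc k"] by auto
  then have "run_len U (y + 2 * Suc k) = Suc (run_len U (y + 2*k))"
    by (subst run_len_in) auto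
  with Suc show ?case by auto
qed simp

lemma run_len_remove_other_parity:
  "\<not> (x \<le> y \<and> even (y - x)) \<Longrightarrow> run_len (U - {x}) y = run_len U y"
proof (induction y rule: less_induct)
  case (less y)
  have "y \<noteq> x" using less.prems by auto
  moreover have "run_len (U - {x}) (y - 2) = run_len U (y - 2)" if "2 \<le> y"
  proof -
    have "\<not> (x \<le> y - 2 \<and> even (y - 2 - x))" using less.prems that by presburger
    then show ?thesis using less.IH that by auto
  qed
  ultimately show ?case
    by (simp add: run_len_eq[of "U - {x}" y] run_len_eq[of U y])
qed

lemma run_len_remove_below_gap:
  "z \<notin> U \<Longrightarrow> x < z \<Longrightarrow> z \<le> y \<Longrightarrow> even (y - z) \<Longrightarrow> run_len (U - {x}) y = run_len U y"
proof (induction y rule: less_induct)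
  case (less y)
  show ?case
  proof (cases "y = z")
    case True
    with less.prems show ?thesis by (simp add: run_len_notin)
  next
    case False
    then have y2: "z \<le> y - 2" "2 \<le> y" using less.prems by presburger+
    have "even (y - 2 - z)" using less.prems y2 by (auto simp: dvd_diff_nat)
    then have "run_len (U - {x}) (y - 2) = run_len U (y - 2)" using less.IH less.prems y2 by auto
    moreover have "y \<noteq> x" using less.prems by auto
    ultimately show ?thesis using y2 by (simp add: run_len_eq[of "U - {x}" y] run_len_eq[of U y])
  qed
qed

lemma run_len_chain:
  "t < run_len U y \<Longrightarrow> 2*t \<le> y \<and> y - 2*t \<in> U \<and> run_len U (y - 2*t) = run_len U y - t"
proof (induction t)
  case 0
  then show ?case by (cases "y \<in> U") (auto simp: run_len_notin)
next
  case (Suc t)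
  then have IH: "2*t \<le> y" "y - 2*t \<in> U" "run_len U (y - 2*t) = run_len U y - t" by auto
  define z where "z = y - 2*t"
  have "2 \<le> run_len U z" using Suc.prems IH unfolding z_def by simp
  moreover have "run_len U z = Suc (if 2 \<le> z then run_len U (z - 2) else 0)"
    using IH unfolding z_def by (simp add: run_len_in)
  ultimately have z2: "2 \<le> z" "run_len U (z - 2) = run_len U z - 1" by (auto split: if_splits)
  then have "z - 2 \<in> U" using \<open>2 \<le> run_len U z\<close> by (cases "z - 2 \<in> U") (auto simp: run_len_notin)
  moreover have "z - 2 = y - 2 * Suc t" "2 * Suc t \<le> y" using z2 IH unfolding z_def by auto
  ultimately show ?case using z2 IH unfolding z_def by auto
qed

lemma run_start_gap: "0 < run_len U y \<Longrightarrow> 2 * run_len U y \<le> y \<Longrightarrow> y - 2 * run_len U y \<notin> U"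
proof -
  assume a: "0 < run_len U y" "2 * run_len U y \<le> y"
  define z where "z = y - 2 * (run_len U y - 1)"
  have z: "z \<in> U" "run_len U z = 1" "2 \<le> z"
    using run_len_chain[of "run_len U y - 1" U y] a unfolding z_def by auto
  then have "run_len U (z - 2) = 0" by (simp add: run_len_in)
  moreover have "z - 2 = y - 2 * run_len U y" using a unfolding z_def by auto
  ultimately show ?thesis using run_len_pos by fastforce
qed

lemma run_continues:
  fixes U :: "nat set"
  assumes "finite U" "y \<in> U"
  obtains j where "\<forall>t\<le>j. y + 2*t \<in> U" "y + 2*(j+1) \<notin> U"
proof -
  have ex: "\<exists>k. y + 2*k \<notin> U"
    using Max_ge[OF assms(1)] by (metis add_Suc_right lessI mult_2 not_le trans_less_add2)
  define k where "k = (LEAST k. y + 2*k \<notin> U)"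
  have k: "y + 2*k \<notin> U" unfolding k_def by (rule LeastI_ex[OF ex])
  have "t < k \<Longrightarrow> y + 2*t \<in> U" for t unfolding k_def using not_less_Least by blast
  moreover have "k \<noteq> 0" using k assms(2) by (cases k) auto
  ultimately show ?thesis using k that[of "k - 1"] by auto
qed

lemma run_ends_nonempty: "finite U \<Longrightarrow> U \<noteq> {} \<Longrightarrow> run_ends U \<noteq> {}"
  using Max_in[of U] Max_ge[of U "Max U + 2"] unfolding run_ends_def by fastforce

text \<open>U' arises from U by replacing one run of length L by runs of lengths a and c,
  where length 0 stands for no run.\<close>

definition splits_run :: "nat set \<Rightarrow> nat set \<Rightarrow> nat \<Rightarrow> nat \<Rightarrow> nat \<Rightarrow> bool" where
  "splits_run U U' L a c \<longleftrightarrow> (\<forall>f. f 0 = 0 \<longrightarrow> run_sum f U' + f L = run_sum f U + f a + f c)"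

lemma splits_runD: "splits_run U U' L a c \<Longrightarrow> f 0 = 0 \<Longrightarrow> run_sum f U' + f L = run_sum f U + f a + f c"
  unfolding splits_run_def by blast

lemma run_ends_remove:
  assumes "x \<in> U"
  shows "run_ends (U - {x}) = (run_ends U - {x}) \<union> {y \<in> U. y + 2 = x}"
    "(run_ends U - {x}) \<inter> {y \<in> U. y + 2 = x} = {}"
  using assms unfolding run_ends_def by auto

lemma run_len_remove_other_end:
  assumes run: "\<forall>t\<le>j. x + 2*t \<in> U" and gap: "x + 2*(j+1) \<notin> U"
    and e: "e \<in> run_ends U" "e \<noteq> x + 2*j"
  shows "run_len (U - {x}) e = run_len U e"
proof (cases "x \<le> e \<and> even (e - x)")
  case False
  then show ?thesis by (rule run_len_remove_other_parity)
next
  case True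
  then obtain t where t: "e = x + 2*t" by (metis dvd_def le_add_diff_inverse)
  show ?thesis
  proof (cases "t \<le> j")
    case True
    with e t have "t < j" by auto
    then have "e + 2 \<in> U" using run t by (metis Suc_leI add.assoc mult_Suc_right add_2_eq_Suc' add.commute)
    with e show ?thesis unfolding run_ends_def by auto
  next
    case False
    show ?thesis
      by (rule run_len_remove_below_gap[OF gap]) (use False t in \<open>auto simp: algebra_simps\<close>)
  qed
qed

lemma splits_run_remove:
  assumes fin: "finite U" and xU: "x \<in> U"
    and run: "\<forall>t\<le>j. x + 2*t \<in> U" and gap: "x + 2*(j+1) \<notin> U"
  shows "splits_run U (U - {x}) (run_len U x + j) (run_len U x - 1) j"
  unfolding splits_run_def
proof (intro allI impI)
  fix f :: "nat \<Rightarrow> nat" assume f0: "f 0 = 0"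
  define e where "e = x + 2*j"
  define Other where "Other = run_ends U - {x, e}"
  define W where "W = {y \<in> U. y + 2 = x}"
  have fin_ends: "finite (run_ends U)" using fin unfolding run_ends_def by auto
  have eE: "e \<in> run_ends U" using run gap unfolding e_def run_ends_def by (auto simp: algebra_simps)
  have len_e: "run_len U e = j + run_len U x" unfolding e_def by (rule run_len_add) (use run in auto)
  have len'_e: "run_len (U - {x}) e = j"
    unfolding e_def using run_len_add[of j x "U - {x}"] run run_len_notin[of x "U - {x}"] by auto
  have len'_Other: "run_len (U - {x}) e' = run_len U e'" if "e' \<in> Other" for e'
    using run_len_remove_other_end[OF run gap] that unfolding Other_def e_def by blast
  have sum_U: "run_sum f U = f (run_len U e) + (\<Sum>e'\<in>Other. f (run_len U e'))"
  proof -
    have "0 < j \<Longrightarrow> x \<notin> run_ends U" using run[rule_format, of 1] unfolding run_ends_def by auto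
    then have "run_ends U = insert e Other" "e \<notin> Other" using eE unfolding Other_def by (auto simp: e_def)
    moreover have "finite Other" using fin_ends unfolding Other_def by simp
    ultimately show ?thesis unfolding run_sum_def by simp
  qed
  have sum_old: "(\<Sum>e'\<in>run_ends U - {x}. f (run_len (U - {x}) e')) = f j + (\<Sum>e'\<in>Other. f (run_len U e'))"
  proof (cases "j = 0")
    case True
    then have "run_ends U - {x} = Other" unfolding Other_def e_def by auto
    then show ?thesis using True f0 len'_Other by (auto intro: sum.cong)
  next
    case False
    then have "run_ends U - {x} = insert e Other" "e \<notin> Other" using eE unfolding Other_def e_def by auto
    then show ?thesis using len'_e len'_Other fin_ends unfolding Other_def by (auto intro: sum.cong)
  qed
  have sum_W: "(\<Sum>y\<in>W. f (run_len (U - {x}) y)) = f (run_len U x - 1)"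
  proof (cases "2 \<le> x \<and> x - 2 \<in> U")
    case True
    then have "W = {x - 2}" unfolding W_def by auto
    moreover have "run_len (U - {x}) (x - 2) = run_len U (x - 2)"
      by (rule run_len_remove_other_parity) (use True in auto)
    moreover have "run_len U x = Suc (run_len U (x - 2))" using xU True by (simp add: run_len_in)
    ultimately show ?thesis by simp
  next
    case False
    then have "W = {}" unfolding W_def by auto
    moreover have "run_len U x = 1" using xU False by (auto simp: run_len_in run_len_notin)
    ultimately show ?thesis using f0 by simp
  qed
  have "run_sum f (U - {x}) = (\<Sum>e'\<in>run_ends U - {x}. f (run_len (U - {x}) e')) + (\<Sum>y\<in>W. f (run_len (U - {x}) y))"
    unfolding run_sum_def run_ends_remove[OF xU] W_def[symmetric]
    using run_ends_remove(2)[OF xU] fin_ends fin by (simp add: W_def sum.union_disjoint)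
  with sum_U sum_old sum_W len_e
  show "run_sum f (U - {x}) + f (run_len U x + j) = run_sum f U + f (run_len U x - 1) + f j"
    by (simp add: add.commute)
qed

lemma splits_run_left:
  assumes "finite U" "1 \<le> v" "v - 1 \<in> U" "v + 1 \<notin> U"
  shows "splits_run U (U - {v - 1, v + 1}) (run_len U (v - 1)) (run_len U (v - 1) - 1) 0"
proof -
  have "splits_run U (U - {v - 1}) (run_len U (v - 1) + 0) (run_len U (v - 1) - 1) 0"
    by (rule splits_run_remove) (use assms in auto)
  moreover have "U - {v - 1, v + 1} = U - {v - 1}" using assms by auto
  ultimately show ?thesis by simp
qed

lemma splits_run_right:
  assumes "finite U" "1 \<le> v" "v - 1 \<notin> U"
    and "\<forall>t\<le>j. v + 1 + 2*t \<in> U" "v + 1 + 2*(j+1) \<notin> U"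
  shows "splits_run U (U - {v - 1, v + 1}) (Suc j) j 0"
proof -
  have "v + 1 \<in> U" using assms(4) by auto
  then have "run_len U (v + 1) = 1" using assms(3) by (simp add: run_len_in run_len_notin)
  moreover have "splits_run U (U - {v + 1}) (run_len U (v + 1) + j) (run_len U (v + 1) - 1) j"
    by (rule splits_run_remove) (use assms \<open>v + 1 \<in> U\<close> in auto)
  moreover have "U - {v - 1, v + 1} = U - {v + 1}" using assms by auto
  ultimately show ?thesis by (simp add: splits_run_def add.commute add.left_commute)
qed

lemma splits_run_both:
  assumes fin: "finite U" and v: "1 \<le> v" "v - 1 \<in> U"
    and run: "\<forall>t\<le>j. v + 1 + 2*t \<in> U" and gap: "v + 1 + 2*(j+1) \<notin> U"
  shows "splits_run U (U - {v - 1, v + 1}) (run_len U (v - 1) + j + 1) (run_len U (v - 1) - 1) j"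
  unfolding splits_run_def
proof (intro allI impI)
  fix f :: "nat \<Rightarrow> nat" assume f0: "f 0 = 0"
  define U1 where "U1 = U - {v - 1}"
  have run': "\<forall>t\<le>j+1. v - 1 + 2*t \<in> U"
  proof (intro allI impI)
    fix t assume "t \<le> j + 1"
    with v run show "v - 1 + 2*t \<in> U" by (cases t) auto
  qed
  have "splits_run U U1 (run_len U (v - 1) + (j + 1)) (run_len U (v - 1) - 1) (j + 1)"
    unfolding U1_def by (rule splits_run_remove[OF fin v(2) run']) (use gap v in \<open>simp add: algebra_simps\<close>)
  then have first: "run_sum f U1 + f (run_len U (v - 1) + (j + 1)) = run_sum f U + f (run_len U (v - 1) - 1) + f (j + 1)"
    using f0 by (rule splits_runD)
  have in1: "v + 1 \<in> U1" using run v unfolding U1_def by auto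
  have "run_len U1 (v + 1) = 1" using in1 v by (simp add: run_len_in run_len_notin U1_def)
  moreover have "splits_run U1 (U1 - {v + 1}) (run_len U1 (v + 1) + j) (run_len U1 (v + 1) - 1) j"
    by (rule splits_run_remove) (use fin in1 run gap v in \<open>auto simp: U1_def\<close>)
  ultimately have "run_sum f (U1 - {v + 1}) + f (Suc j) = run_sum f U1 + f j"
    using splits_runD[of U1 _ _ _ _ f] f0 by (simp add: add.commute)
  moreover have "U1 - {v + 1} = U - {v - 1, v + 1}" unfolding U1_def by auto
  ultimately show "run_sum f (U - {v - 1, v + 1}) + f (run_len U (v - 1) + j + 1)
      = run_sum f U + f (run_len U (v - 1) - 1) + f j"
    using first by (simp add: algebra_simps)
qed

lemma splits_run_last:
  assumes fin: "finite U" and e: "e \<in> run_ends U" and L: "2 \<le> run_len U e" and v: "v + 1 = e"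
  shows "splits_run U (U - {v - 1, v + 1}) (run_len U e) (run_len U e - 2) 0"
proof -
  have e2: "2 \<le> e" "e - 2 \<in> U" "run_len U (e - 2) = run_len U e - 1"
    using run_len_chain[of 1 U e] L by auto
  then have v': "1 \<le> v" "v - 1 = e - 2" using v by auto
  have "splits_run U (U - {v - 1, v + 1}) (run_len U (v - 1) + 0 + 1) (run_len U (v - 1) - 1) 0"
    by (rule splits_run_both) (use fin v v' e2 e in \<open>auto simp: run_ends_def\<close>)
  then show ?thesis using v' e2 L by (simp add: numeral_2_eq_2)
qed

lemma splits_run_first:
  assumes fin: "finite U" and e: "e \<in> run_ends U" and v: "1 \<le> v" "v + 2 * run_len U e = e + 1"
  shows "splits_run U (U - {v - 1, v + 1}) (run_len U e) (run_len U e - 1) 0"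
proof -
  define L where "L = run_len U e"
  have eU: "e \<in> U" "e + 2 \<notin> U" using e unfolding run_ends_def by auto
  have L1: "1 \<le> L" using eU(1) run_len_pos unfolding L_def by blast
  have "e - 2 * L \<notin> U" using run_start_gap[of U e] L1 v unfolding L_def by auto
  moreover have "e - 2 * L = v - 1" using v unfolding L_def by simp
  ultimately have gap: "v - 1 \<notin> U" by simp
  have run: "\<forall>t\<le>L - 1. v + 1 + 2 * t \<in> U"
  proof (intro allI impI)
    fix t assume "t \<le> L - 1"
    then have "L - 1 - t < run_len U e" using L1 unfolding L_def by auto
    then have "e - 2 * (L - 1 - t) \<in> U" using run_len_chain by blast
    moreover have "e - 2 * (L - 1 - t) = v + 1 + 2 * t"
      using \<open>t \<le> L - 1\<close> v L1 unfolding L_def by arith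
    ultimately show "v + 1 + 2 * t \<in> U" by simp
  qed
  have "v + 1 + 2 * (L - 1 + 1) \<notin> U" using eU v L1 unfolding L_def by (simp add: algebra_simps)
  with splits_run_right[OF fin v(1) gap run] show ?thesis using L1 unfolding L_def by simp
qed

lemma splits_run_move:
  assumes fin: "finite U" and v: "1 \<le> v" and dominates: "v - 1 \<in> U \<or> v + 1 \<in> U"
  obtains L a c where "L = a + c + 2 \<or> (L = a + c + 1 \<and> (a = 0 \<or> c = 0))"
    and "splits_run U (U - {v - 1, v + 1}) L a c"
proof (cases "v + 1 \<in> U")
  case True
  then obtain j where j: "\<forall>t\<le>j. v + 1 + 2*t \<in> U" "v + 1 + 2*(j+1) \<notin> U"
    using run_continues[OF fin] by blast
  show ?thesis
  proof (cases "v - 1 \<in> U")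
    case True
    have "1 \<le> run_len U (v - 1)" using True by (rule run_len_pos)
    then show ?thesis
      by (intro that[OF _ splits_run_both[OF fin v True j]]) auto
  next
    case False
    show ?thesis by (intro that[OF _ splits_run_right[OF fin v False j]]) auto
  qed
next
  case False
  then have "v - 1 \<in> U" using dominates by auto
  then have "1 \<le> run_len U (v - 1)" by (rule run_len_pos)
  then show ?thesis
    by (intro that[OF _ splits_run_left[OF fin v \<open>v - 1 \<in> U\<close> False]]) auto
qed

section \<open>Run weights\<close>

definition run_weight :: "nat \<Rightarrow> nat" where
  "run_weight L = (4 * L + 2) div 3"

lemma run_weight_0 [simp]: "run_weight 0 = 0"
  by (simp add: run_weight_def)

lemma run_weight_shift: "run_weight (3 * q + r) = 4 * q + run_weight r"
proof -
  have "4 * (3 * q + r) + 2 = (4 * r + 2) + 3 * (4 * q)" by simp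
  then show ?thesis unfolding run_weight_def by (simp only: div_mult_self2)
qed

lemma less_3_cases: "x < (3::nat) \<Longrightarrow> x = 0 \<or> x = 1 \<or> x = 2"
  by auto

lemma run_weight_split_residues:
  assumes "x < 3" "y < 3" "l = x + y + 2 \<or> (l = x + y + 1 \<and> (x = 0 \<or> y = 0))"
  shows "run_weight x + run_weight y + 1 \<le> run_weight l \<and> run_weight l \<le> run_weight x + run_weight y + 3"
  using less_3_cases[OF assms(1)] less_3_cases[OF assms(2)] assms(3)
  by (elim disjE conjE) (simp_all add: run_weight_def)

lemma run_weight_split:
  assumes shape: "L = a + c + 2 \<or> (L = a + c + 1 \<and> (a = 0 \<or> c = 0))"
  shows "run_weight a + run_weight c + 1 \<le> run_weight L" "run_weight L \<le> run_weight a + run_weight c + 3"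
proof -
  define p x s y where "p = a div 3" "x = a mod 3" "s = c div 3" "y = c mod 3"
  define l where "l = L - 3 * (p + s)"
  have a: "a = 3 * p + x" and c: "c = 3 * s + y" and "x < 3" "y < 3"
    unfolding p_x_s_y_def by simp_all
  have L: "L = 3 * (p + s) + l" using shape a c unfolding l_def by auto
  have "l = x + y + 2 \<or> (l = x + y + 1 \<and> (x = 0 \<or> y = 0))" using shape a c L by auto
  with \<open>x < 3\<close> \<open>y < 3\<close> have "run_weight x + run_weight y + 1 \<le> run_weight l \<and> run_weight l \<le> run_weight x + run_weight y + 3"
    by (rule run_weight_split_residues)
  moreover have "run_weight a = 4 * p + run_weight x" "run_weight c = 4 * s + run_weight y"
    "run_weight L = 4 * (p + s) + run_weight l"
    by (subst a c L, rule run_weight_shift)+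
  ultimately show "run_weight a + run_weight c + 1 \<le> run_weight L" "run_weight L \<le> run_weight a + run_weight c + 3"
    by simp_all
qed

lemma odd_run_weight_iff: "odd (run_weight L) \<longleftrightarrow> L mod 3 = 2"
proof -
  have "run_weight L = 4 * (L div 3) + run_weight (L mod 3)"
    using run_weight_shift[of "L div 3" "L mod 3"] by simp
  moreover have "L mod 3 < 3" by simp
  ultimately show ?thesis
    using less_3_cases[of "L mod 3"] by (auto simp: run_weight_def)
qed

lemma run_weight_shorten:
  assumes "1 \<le> L"
  shows "run_weight L \<le> run_weight (L - 1) + (if L mod 3 = 1 then 2 else 1)"
proof -
  define p x where "p = (L - 1) div 3" "x = (L - 1) mod 3"
  have L: "L - 1 = 3 * p + x" "L = 3 * p + (x + 1)" using assms unfolding p_x_def by simp_all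
  have "run_weight (L - 1) = 4 * p + run_weight x" "run_weight L = 4 * p + run_weight (x + 1)"
    by (subst L, rule run_weight_shift)+
  moreover have "L mod 3 = (x + 1) mod 3" using L(2) by simp
  moreover have "x < 3" unfolding p_x_def by simp
  ultimately show ?thesis
    using less_3_cases[of x] by (auto simp: run_weight_def)
qed

lemma run_weight_shorten_two:
  assumes "(2 \<le> L \<and> a = L - 2) \<or> (L = 1 \<and> a = 0)"
  shows "run_weight a + (if L mod 3 = 2 then 3 else 2) \<le> run_weight L"
  using assms
proof (elim disjE conjE)
  assume "2 \<le> L" "a = L - 2"
  define p x where "p = a div 3" "x = a mod 3"
  have aL: "a = 3 * p + x" "L = 3 * p + (x + 2)" using \<open>2 \<le> L\<close> \<open>a = L - 2\<close>
    unfolding p_x_def by simp_all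
  have "run_weight a = 4 * p + run_weight x" "run_weight L = 4 * p + run_weight (x + 2)"
    by (subst aL, rule run_weight_shift)+
  moreover have "L mod 3 = (x + 2) mod 3" using aL(2) by presburger
  moreover have "x < 3" unfolding p_x_def by simp
  ultimately show ?thesis
    using less_3_cases[of x] by (auto simp: run_weight_def)
qed (simp add: run_weight_def)

lemma run_weight_remove_middle:
  assumes "a + c + 1 = m" "m mod 3 \<noteq> 0"
  shows "run_weight a + run_weight c < run_weight m"
proof -
  define p x s y where "p = a div 3" "x = a mod 3" "s = c div 3" "y = c mod 3"
  have a: "a = 3 * p + x" and c: "c = 3 * s + y" unfolding p_x_s_y_def by simp_all
  have m: "m = 3 * (p + s) + (x + y + 1)" using assms(1) a c by simp
  have "run_weight a = 4 * p + run_weight x" "run_weight c = 4 * s + run_weight y"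
    "run_weight m = 4 * (p + s) + run_weight (x + y + 1)"
    by (subst a c m, rule run_weight_shift)+
  moreover have "(x + y + 1) mod 3 \<noteq> 0" using assms(2) unfolding m by presburger
  moreover have "x < 3" "y < 3" unfolding p_x_s_y_def by simp_all
  ultimately show ?thesis
    using less_3_cases[of x] less_3_cases[of y] by (auto simp: run_weight_def)
qed

section \<open>The potential and good moves\<close>

definition potential :: "bool \<Rightarrow> nat set \<Rightarrow> nat" where
  "potential d U = (run_sum run_weight U + (if d then 0 else 1)) div 2"

lemma potential_empty [simp]: "potential d {} = 0"
  by (simp add: potential_def run_sum_def run_ends_def)

lemma run_end_parity:
  assumes "finite U" "U \<noteq> {}"
  obtains e where "e \<in> run_ends U" "odd (run_sum f U) \<longrightarrow> odd (f (run_len U e))"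
proof (cases "odd (run_sum f U)")
  case True
  have "\<exists>e\<in>run_ends U. odd (f (run_len U e))"
  proof (rule ccontr)
    assume "\<not> (\<exists>e\<in>run_ends U. odd (f (run_len U e)))"
    then have "even (run_sum f U)" unfolding run_sum_def by (auto intro: dvd_sum)
    with True show False by simp
  qed
  then obtain e where "e \<in> run_ends U" "odd (f (run_len U e))" by blast
  then show ?thesis by (intro that) auto
next
  case False
  obtain e where "e \<in> run_ends U" using run_ends_nonempty[OF assms] by blast
  then show ?thesis using False by (intro that) auto
qed

lemma potential_move_bounds:
  assumes "finite U" "1 \<le> v" "v - 1 \<in> U \<or> v + 1 \<in> U"
  shows "potential True U \<le> Suc (potential False (U - {v - 1, v + 1}))"
    "Suc (potential True (U - {v - 1, v + 1})) \<le> potential False U"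
proof -
  obtain L a c where shape: "L = a + c + 2 \<or> (L = a + c + 1 \<and> (a = 0 \<or> c = 0))"
    and split: "splits_run U (U - {v - 1, v + 1}) L a c"
    using splits_run_move[OF assms] .
  define S S' where "S = run_sum run_weight U" "S' = run_sum run_weight (U - {v - 1, v + 1})"
  have "S' + run_weight L = S + run_weight a + run_weight c"
    using splits_runD[OF split, of run_weight] unfolding S_S'_def by simp
  with run_weight_split[OF shape] have "S' + 1 \<le> S" "S \<le> S' + 3" by linarith+
  then have "S div 2 \<le> (S' + 3) div 2" "(S' + 2) div 2 \<le> (S + 1) div 2" by (simp_all add: div_le_mono)
  then show "potential True U \<le> Suc (potential False (U - {v - 1, v + 1}))"
    "Suc (potential True (U - {v - 1, v + 1})) \<le> potential False U"
    unfolding potential_def S_S'_def[symmetric] by simp_all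
qed

lemma potential_dominator_step:
  assumes "splits_run U U' L a 0" "(2 \<le> L \<and> a = L - 2) \<or> (L = 1 \<and> a = 0)"
    and "odd (run_sum run_weight U) \<longrightarrow> odd (run_weight L)"
  shows "Suc (potential False U') \<le> potential True U"
proof -
  define S S' where "S = run_sum run_weight U" "S' = run_sum run_weight U'"
  have "S' + run_weight L = S + run_weight a"
    using splits_runD[OF assms(1), of run_weight] unfolding S_S'_def by simp
  with run_weight_shorten_two[OF assms(2)] have "S' + 2 \<le> S" "L mod 3 = 2 \<Longrightarrow> S' + 3 \<le> S"
    by (auto split: if_splits)
  moreover have "odd S \<Longrightarrow> L mod 3 = 2" using assms(3) unfolding S_S'_def odd_run_weight_iff by auto
  ultimately have "(S' + 3) div 2 \<le> S div 2"
    by (cases "even S") (use div_le_mono[of "S' + 3" "S + 1" 2] div_le_mono[of "S' + 3" S 2] in auto)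
  then show ?thesis unfolding potential_def S_S'_def[symmetric] by simp
qed

lemma potential_staller_step:
  assumes "splits_run U U' L (L - 1) 0" "1 \<le> L"
    and "odd (run_sum run_weight U) \<longrightarrow> odd (run_weight L)"
  shows "potential False U \<le> Suc (potential True U')"
proof -
  define S S' where "S = run_sum run_weight U" "S' = run_sum run_weight U'"
  have "S' + run_weight L = S + run_weight (L - 1)"
    using splits_runD[OF assms(1), of run_weight] unfolding S_S'_def by simp
  with run_weight_shorten[OF assms(2)] have "S \<le> S' + 2" "L mod 3 \<noteq> 1 \<Longrightarrow> S \<le> S' + 1"
    by (auto split: if_splits)
  moreover have "L mod 3 = 1 \<Longrightarrow> even S" using assms(3) unfolding S_S'_def odd_run_weight_iff by auto
  ultimately have "(S + 1) div 2 \<le> (S' + 2) div 2"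
    by (cases "even S") (use div_le_mono[of S "S' + 2" 2] div_le_mono[of "S + 1" "S' + 2" 2] in auto)
  then show ?thesis unfolding potential_def S_S'_def[symmetric] by simp
qed

lemma dominator_good_move:
  assumes n: "2 \<le> n" and U: "U \<subseteq> {1..n}" "U \<noteq> {}"
  obtains v where "v \<in> {1..n}" "v - 1 \<in> U \<or> v + 1 \<in> U"
    "Suc (potential False (U - {v - 1, v + 1})) \<le> potential True U"
proof -
  have fin: "finite U" using U finite_subset by blast
  obtain e where e: "e \<in> run_ends U" and parity: "odd (run_sum run_weight U) \<longrightarrow> odd (run_weight (run_len U e))"
    using run_end_parity[OF fin U(2)] .
  then have eU: "e \<in> U" "e \<in> {1..n}" using U unfolding run_ends_def by auto
  define L where "L = run_len U e"
  have L1: "1 \<le> L" using eU run_len_pos unfolding L_def by blast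
  have "\<exists>v\<in>{1..n}. (v - 1 \<in> U \<or> v + 1 \<in> U) \<and>
      (\<exists>a. ((2 \<le> L \<and> a = L - 2) \<or> (L = 1 \<and> a = 0)) \<and> splits_run U (U - {v - 1, v + 1}) L a 0)"
  proof (cases "2 \<le> L")
    case True
    then have "2 \<le> e" using run_len_chain[of 1 U e] unfolding L_def by auto
    then have "e - 1 + 1 = e" by simp
    then have "splits_run U (U - {e - 1 - 1, e - 1 + 1}) L (L - 2) 0"
      unfolding L_def by (rule splits_run_last[OF fin e True[unfolded L_def]])
    with \<open>2 \<le> e\<close> show ?thesis using True eU by (intro bexI[of _ "e - 1"] conjI exI[of _ "L - 2"]) auto
  next
    case False
    then have L: "L = 1" using L1 by simp
    show ?thesis
    proof (cases "e + 1 \<le> n")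
      case True
      have "splits_run U (U - {e + 1 - 1, e + 1 + 1}) L (L - 1) 0"
        using splits_run_left[OF fin _ _ , of "e + 1"] e unfolding L_def run_ends_def by simp
      then show ?thesis using True eU L by (intro bexI[of _ "e + 1"]) auto
    next
      case False
      then have "e = n" using eU by auto
      then have "splits_run U (U - {e - 1 - 1, e - 1 + 1}) L (L - 1) 0"
        using splits_run_first[OF fin e, of "e - 1"] n L unfolding L_def by simp
      then show ?thesis using \<open>e = n\<close> n eU L by (intro bexI[of _ "e - 1"]) auto
    qed
  qed
  then obtain v a where "v \<in> {1..n}" "v - 1 \<in> U \<or> v + 1 \<in> U"
    "(2 \<le> L \<and> a = L - 2) \<or> (L = 1 \<and> a = 0)" "splits_run U (U - {v - 1, v + 1}) L a 0"
    by blast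
  with potential_dominator_step parity that show ?thesis unfolding L_def by blast
qed

lemma staller_good_move:
  assumes n: "even n" and U: "U \<subseteq> {1..n}" "U \<noteq> {}"
  obtains v where "v \<in> {1..n}" "v - 1 \<in> U \<or> v + 1 \<in> U"
    "potential False U \<le> Suc (potential True (U - {v - 1, v + 1}))"
proof -
  have fin: "finite U" using U finite_subset by blast
  obtain e where e: "e \<in> run_ends U" and parity: "odd (run_sum run_weight U) \<longrightarrow> odd (run_weight (run_len U e))"
    using run_end_parity[OF fin U(2)] .
  then have eU: "e \<in> U" "e \<in> {1..n}" using U unfolding run_ends_def by auto
  define L where "L = run_len U e"
  have L1: "1 \<le> L" using eU run_len_pos unfolding L_def by blast
  have "\<exists>v\<in>{1..n}. (v - 1 \<in> U \<or> v + 1 \<in> U) \<and> splits_run U (U - {v - 1, v + 1}) L (L - 1) 0"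
  proof (cases "e + 1 \<le> n")
    case True
    have "splits_run U (U - {e + 1 - 1, e + 1 + 1}) L (L - 1) 0"
      using splits_run_left[OF fin _ _ , of "e + 1"] e unfolding L_def run_ends_def by simp
    then show ?thesis using True eU by (intro bexI[of _ "e + 1"]) auto
  next
    case False
    \<comment> \<open>the run ends at the even vertex n, so its first vertex s is even and s - 1 is a vertex\<close>
    then have "e = n" using eU by auto
    define s where "s = e - 2 * (L - 1)"
    have s: "2 * (L - 1) \<le> e" "s \<in> {1..n}"
      using run_len_chain[of "L - 1" U e] L1 U unfolding L_def s_def by auto
    moreover have "even s" using n s(1) \<open>e = n\<close> unfolding s_def by auto
    ultimately have "2 \<le> s" by (auto elim: oddE)
    then have "splits_run U (U - {s - 1 - 1, s - 1 + 1}) L (L - 1) 0"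
      using splits_run_first[OF fin e, of "s - 1"] s L1 unfolding L_def s_def by simp
    moreover have "s \<in> U" using run_len_chain[of "L - 1" U e] L1 unfolding L_def s_def by auto
    ultimately show ?thesis using s \<open>2 \<le> s\<close> by (intro bexI[of _ "s - 1"]) auto
  qed
  then obtain v where "v \<in> {1..n}" "v - 1 \<in> U \<or> v + 1 \<in> U"
    "splits_run U (U - {v - 1, v + 1}) L (L - 1) 0"
    by blast
  with potential_staller_step L1 parity that show ?thesis unfolding L_def by blast
qed

section \<open>The game on a path\<close>

definition undominated :: "nat \<Rightarrow> nat set \<Rightarrow> nat set" where
  "undominated n T = {1..n} - T"

lemma open_nbhd_path: "v \<in> {1..n} \<Longrightarrow> open_nbhd {1..n} path_adj v = {1..n} \<inter> {v - 1, v + 1}"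
  unfolding open_nbhd_def path_adj_def by auto

lemma undominated_move:
  "v \<in> {1..n} \<Longrightarrow> undominated n (T \<union> open_nbhd {1..n} path_adj v) = undominated n T - {v - 1, v + 1}"
  unfolding undominated_def using open_nbhd_path[of v n] by auto

lemma tdg_legal_path_iff:
  "tdg_legal {1..n} path_adj T v \<longleftrightarrow> v \<in> {1..n} \<and> (v - 1 \<in> undominated n T \<or> v + 1 \<in> undominated n T)"
proof (cases "v \<in> {1..n}")
  case True
  show ?thesis unfolding tdg_legal_def open_nbhd_path[OF True] undominated_def using True by (auto simp: subset_iff)
qed (auto simp: tdg_legal_def)

lemma ex_tdg_legal_path_iff:
  assumes "2 \<le> n"
  shows "(\<exists>v. tdg_legal {1..n} path_adj T v) \<longleftrightarrow> undominated n T \<noteq> {}"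
proof
  assume "undominated n T \<noteq> {}"
  then obtain x where x: "x \<in> undominated n T" by blast
  then have "1 \<le> x" "x \<le> n" unfolding undominated_def by auto
  then have "tdg_legal {1..n} path_adj T (if x < n then x + 1 else x - 1)"
    using x assms unfolding tdg_legal_path_iff by auto
  then show "\<exists>v. tdg_legal {1..n} path_adj T v" ..
next
  assume "\<exists>v. tdg_legal {1..n} path_adj T v"
  then show "undominated n T \<noteq> {}" unfolding tdg_legal_path_iff by blast
qed

lemma tdg_val_path_le_potential:
  assumes n: "2 \<le> n"
  shows "tdg_val {1..n} path_adj k d T \<le> potential d (undominated n T)"
proof (induction k arbitrary: d T)
  case (Suc k)
  define U where "U = undominated n T"
  have U: "U \<subseteq> {1..n}" "finite U" unfolding U_def undominated_def by auto
  have IH: "tdg_val {1..n} path_adj k d' (T \<union> open_nbhd {1..n} path_adj v) \<le> potential d' (U - {v - 1, v + 1})"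
    if "v \<in> {1..n}" for v d'
    using Suc.IH unfolding U_def undominated_move[OF that, symmetric] .
  show ?case
  proof (cases "U = {}")
    case True
    then have "{v. tdg_legal {1..n} path_adj T v} = {}" using ex_tdg_legal_path_iff[OF n] unfolding U_def by auto
    then show ?thesis by simp
  next
    case False
    show ?thesis
    proof (cases d)
      case True
      obtain v where v: "v \<in> {1..n}" "v - 1 \<in> U \<or> v + 1 \<in> U"
        and good: "Suc (potential False (U - {v - 1, v + 1})) \<le> potential True U"
        using dominator_good_move[OF n U(1) False] .
      have "tdg_legal {1..n} path_adj T v" using v unfolding tdg_legal_path_iff U_def by blast
      then have "tdg_val {1..n} path_adj (Suc k) True T
          \<le> Suc (tdg_val {1..n} path_adj k False (T \<union> open_nbhd {1..n} path_adj v))"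
        by (intro tdg_val_Dominator_le) simp
      also have "\<dots> \<le> potential True U" using IH[OF v(1), of False] good by linarith
      finally show ?thesis using True unfolding U_def by simp
    next
      case False
      have "tdg_val {1..n} path_adj (Suc k) False T \<le> potential False U"
      proof (rule tdg_val_Staller_le)
        fix w assume "tdg_legal {1..n} path_adj T w"
        then have w: "w \<in> {1..n}" "w - 1 \<in> U \<or> w + 1 \<in> U" unfolding tdg_legal_path_iff U_def by auto
        show "Suc (tdg_val {1..n} path_adj k True (T \<union> open_nbhd {1..n} path_adj w)) \<le> potential False U"
          using IH[OF w(1), of True] potential_move_bounds(2)[OF U(2) _ w(2)] w(1) by force
      qed simp
      then show ?thesis using False unfolding U_def by simp
    qed
  qed
qed simp

lemma tdg_val_path_ge_potential:
  assumes n: "even n" "2 \<le> n"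
  shows "card (undominated n T) \<le> k \<Longrightarrow> potential d (undominated n T) \<le> tdg_val {1..n} path_adj k d T"
proof (induction k arbitrary: d T)
  case 0
  then have "undominated n T = {}" by (simp add: undominated_def)
  then show ?case by simp
next
  case (Suc k)
  define U where "U = undominated n T"
  have U: "U \<subseteq> {1..n}" "finite U" unfolding U_def undominated_def by auto
  have IH: "potential d' (U - {v - 1, v + 1}) \<le> tdg_val {1..n} path_adj k d' (T \<union> open_nbhd {1..n} path_adj v)"
    if "v \<in> {1..n}" "v - 1 \<in> U \<or> v + 1 \<in> U" for v d'
  proof -
    have "card (U - {v - 1, v + 1}) < card U" using that U(2) by (intro psubset_card_mono) auto
    with Suc.prems have "card (undominated n (T \<union> open_nbhd {1..n} path_adj v)) \<le> k"
      unfolding U_def undominated_move[OF that(1)] by simp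
    from Suc.IH[OF this] show ?thesis unfolding U_def undominated_move[OF that(1)] .
  qed
  show ?case
  proof (cases "U = {}")
    case True
    then show ?thesis unfolding U_def by simp
  next
    case False
    show ?thesis
    proof (cases d)
      case True
      obtain v where "tdg_legal {1..n} path_adj T v"
        using False ex_tdg_legal_path_iff[OF n(2)] unfolding U_def by blast
      have "potential True U \<le> tdg_val {1..n} path_adj (Suc k) True T"
      proof (rule tdg_val_Dominator_ge)
        fix w assume "tdg_legal {1..n} path_adj T w"
        then have w: "w \<in> {1..n}" "w - 1 \<in> U \<or> w + 1 \<in> U" unfolding tdg_legal_path_iff U_def by auto
        show "potential True U \<le> Suc (tdg_val {1..n} path_adj k False (T \<union> open_nbhd {1..n} path_adj w))"
          using IH[OF w, of False] potential_move_bounds(1)[OF U(2) _ w(2)] w(1) by force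
      qed (use \<open>tdg_legal {1..n} path_adj T v\<close> in simp_all)
      then show ?thesis using True unfolding U_def by simp
    next
      case False
      obtain v where v: "v \<in> {1..n}" "v - 1 \<in> U \<or> v + 1 \<in> U"
        and good: "potential False U \<le> Suc (potential True (U - {v - 1, v + 1}))"
        using staller_good_move[OF n(1) U(1) \<open>U \<noteq> {}\<close>] .
      have "tdg_legal {1..n} path_adj T v" using v unfolding tdg_legal_path_iff U_def by blast
      have "potential False U \<le> Suc (tdg_val {1..n} path_adj k True (T \<union> open_nbhd {1..n} path_adj v))"
        using good IH[OF v, of True] by linarith
      also have "\<dots> \<le> tdg_val {1..n} path_adj (Suc k) False T"
        using \<open>tdg_legal {1..n} path_adj T v\<close> by (intro tdg_val_Staller_ge) simp
      finally show ?thesis using False unfolding U_def by simp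
    qed
  qed
qed

lemma tdg_val_path:
  assumes "even n" "2 \<le> n" "card (undominated n T) \<le> k"
  shows "tdg_val {1..n} path_adj k d T = potential d (undominated n T)"
  using tdg_val_path_le_potential[OF assms(2)] tdg_val_path_ge_potential[OF assms] by (rule antisym)

lemma gamma_tg_path: "even n \<Longrightarrow> 2 \<le> n \<Longrightarrow> gamma_tg {1..n} path_adj = potential True {1..n}"
  unfolding gamma_tg_def using tdg_val_path[of n "{}" "card {1..n}"] by (simp add: undominated_def)

lemma gamma_tg_pd_path:
  "even n \<Longrightarrow> 2 \<le> n \<Longrightarrow> gamma_tg_pd {1..n} path_adj v = potential True ({1..n} - {v})"
  unfolding gamma_tg_pd_def
  using tdg_val_path[of n "{v}" "card {1..n}"] card_mono[of "{1..n}" "{1..n} - {v}"]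
  by (simp add: undominated_def)

lemma run_len_interval: "x \<le> n \<Longrightarrow> run_len {1..n} x = (x + 1) div 2"
proof (induction x rule: less_induct)
  case (less x)
  show ?case
  proof (cases "2 \<le> x")
    case True
    with less show ?thesis by (simp add: run_len_in)
  next
    case False
    then show ?thesis using less.prems
      by (cases "x = 0") (auto simp: run_len_in run_len_notin)
  qed
qed

lemma run_sum_interval:
  assumes "even n" "2 \<le> n"
  shows "run_sum f {1..n} = 2 * f (n div 2)"
proof -
  have "run_ends {1..n} = {n - 1, n}" "n - 1 \<noteq> n" using assms unfolding run_ends_def by auto
  moreover have "run_len {1..n} (n - 1) = n div 2" "run_len {1..n} n = n div 2"
    using run_len_interval[of "n - 1" n] run_len_interval[of n n] assms by (auto elim!: evenE)
  ultimately show ?thesis unfolding run_sum_def by simp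
qed

lemma splits_run_interval_remove:
  assumes "even n" "v \<in> {1..n}"
  shows "splits_run {1..n} ({1..n} - {v}) (n div 2) ((v + 1) div 2 - 1) ((n - v) div 2)"
proof -
  have "splits_run {1..n} ({1..n} - {v}) (run_len {1..n} v + (n - v) div 2) (run_len {1..n} v - 1) ((n - v) div 2)"
    by (rule splits_run_remove) (use assms in auto)
  moreover have "run_len {1..n} v = (v + 1) div 2" using run_len_interval assms(2) by auto
  moreover have "(v + 1) div 2 + (n - v) div 2 = n div 2" using assms by auto
  ultimately show ?thesis by simp
qed

lemma potential_remove_vertex_less:
  assumes "even n" "2 \<le> n" "n div 2 mod 3 \<noteq> 0" "v \<in> {1..n}"
  shows "potential True ({1..n} - {v}) < potential True {1..n}"
proof -
  have "run_sum run_weight ({1..n} - {v}) + run_weight (n div 2)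
      = 2 * run_weight (n div 2) + run_weight ((v + 1) div 2 - 1) + run_weight ((n - v) div 2)"
    using splits_runD[OF splits_run_interval_remove[OF assms(1,4)], of run_weight]
      run_sum_interval[OF assms(1,2)] by simp
  moreover have "run_weight ((v + 1) div 2 - 1) + run_weight ((n - v) div 2) < run_weight (n div 2)"
    using assms by (intro run_weight_remove_middle) auto
  ultimately have "run_sum run_weight ({1..n} - {v}) < 2 * run_weight (n div 2)" by linarith
  then show ?thesis
    unfolding potential_def run_sum_interval[OF assms(1,2)] by (simp add: less_mult_imp_div_less)
qed

theorem corollary3p7:
  fixes n :: nat
  assumes "n \<ge> 2" and "n mod 6 \<in> {2, 4}"
  shows "tg_critical {1..n} path_adj"
proof -
  have "even n" "n div 2 mod 3 \<noteq> 0" using assms(2) by auto presburger+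
  then show ?thesis
    unfolding tg_critical_def
    using gamma_tg_path gamma_tg_pd_path potential_remove_vertex_less assms(1) by auto
qed

end
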